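(* Consider the TVFJ dynamics described in the context, and suppose the system is asymptotically stable. Let $\mathbf x_0\in[0,1]^n$ and let $\omega(\mathbf x_0)$ be the $\omega$-limit set of the trajectory with $\mathbf x[0]=\mathbf x_0$. Then for every $\mathbf x^*\in\omega(\mathbf x_0)$ and every $i$, \[ \min_j s_j\le x_i^*\le\max_j s_j . \]
   Context: There are $n$ agents with opinions $\mathbf x[t]$ and innate opinions $\mathbf s\in[0,1]^n$, evolving by $\mathbf x[t+1]=\Lambda[t]W[t]\mathbf x[t]+(I-\Lambda[t])\mathbf s$, with $W[t]$ row-stochastic and $\Lambda[t]=\mathrm{diag}(\lambda_1[t],\dots,\lambda_n[t])$, $\lambda_i[t]\in[0,1]$. Standing assumptions: $\lambda_i[t]=0$ iff $w_{ij}[t]=0$ for all $j$; there is no $\tau$ with $\Lambda[\tau]=0$. The state transition matrix is $\Phi(t,\tau)=\Lambda[t-1]W[t-1]\cdots\Lambda[\tau]W[\tau]$ for $t>\tau$, $\Phi(\tau,\tau)=I$. The system is asymptotically stable if $\lim_{t\to\infty}\|\Phi(t,\tau)\|=0$ for all $\tau\ge0$, where $\|A\|:=\max_i\sum_j|a_{ij}|$. The $\omega$-limit set is $\omega(\mathbf x_0)=\{\mathbf y:\exists\,t_k\to\infty,\ \mathbf x[t_k]\to\mathbf y\}$. *)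

theory Defs
  imports "HOL-Analysis.Analysis"
begin

text \<open>Agents are indexed by a finite type 'n. W t is the matrix W[t],
  lam t is the diagonal of Lambda[t].\<close>

definition row_stochastic :: "real^'n^'n \<Rightarrow> bool" where
  "row_stochastic A \<longleftrightarrow> (\<forall>i j. A $ i $ j \<ge> 0) \<and> (\<forall>i. (\<Sum>j\<in>UNIV. A $ i $ j) = 1)"

definition diagm :: "real^'n \<Rightarrow> real^'n^'n" where
  "diagm l = (\<chi> i j. if i = j then l $ i else 0)"

definition mat_inf_norm :: "real^'n^'n \<Rightarrow> real" where
  "mat_inf_norm A = Max (range (\<lambda>i. \<Sum>j\<in>UNIV. \<bar>A $ i $ j\<bar>))"

definition tvfj_admissible :: "(nat \<Rightarrow> real^'n^'n) \<Rightarrow> (nat \<Rightarrow> real^'n) \<Rightarrow> bool" where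
  "tvfj_admissible W lam \<longleftrightarrow>
     (\<forall>t. row_stochastic (W t)) \<and>
     (\<forall>t i. 0 \<le> lam t $ i \<and> lam t $ i \<le> 1) \<and>
     (\<forall>t i. lam t $ i = 0 \<longleftrightarrow> (\<forall>j. W t $ i $ j = 0)) \<and>
     (\<forall>t. diagm (lam t) \<noteq> 0)"

fun Phi_from :: "(nat \<Rightarrow> real^'n^'n) \<Rightarrow> (nat \<Rightarrow> real^'n) \<Rightarrow> nat \<Rightarrow> nat \<Rightarrow> real^'n^'n" where
  "Phi_from W lam tau 0 = mat 1"
| "Phi_from W lam tau (Suc k) = (diagm (lam (tau + k)) ** W (tau + k)) ** Phi_from W lam tau k"

definition Phi :: "(nat \<Rightarrow> real^'n^'n) \<Rightarrow> (nat \<Rightarrow> real^'n) \<Rightarrow> nat \<Rightarrow> nat \<Rightarrow> real^'n^'n" where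
  "Phi W lam t tau = Phi_from W lam tau (t - tau)"

definition asymp_stable :: "(nat \<Rightarrow> real^'n^'n) \<Rightarrow> (nat \<Rightarrow> real^'n) \<Rightarrow> bool" where
  "asymp_stable W lam \<longleftrightarrow> (\<forall>tau. ((\<lambda>t. mat_inf_norm (Phi W lam t tau)) \<longlongrightarrow> 0) sequentially)"

fun traj :: "(nat \<Rightarrow> real^'n^'n) \<Rightarrow> (nat \<Rightarrow> real^'n) \<Rightarrow> real^'n \<Rightarrow> real^'n \<Rightarrow> nat \<Rightarrow> real^'n" where
  "traj W lam s x0 0 = x0"
| "traj W lam s x0 (Suc t) =
     (diagm (lam t) ** W t) *v traj W lam s x0 t + (mat 1 - diagm (lam t)) *v s"

definition omega_limit :: "(nat \<Rightarrow> 'a::topological_space) \<Rightarrow> 'a set" where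
  "omega_limit x = {y. \<exists>r. strict_mono r \<and> (x \<circ> r) \<longlonglongrightarrow> y}"

end

theory Submission
  imports Defs
begin

text \<open>Let M = max s. The deviation x[t] - M evolves by the nonnegative matrices Lambda[t] W[t]
  plus the nonpositive input (I - Lambda[t]) (s - M), so it is dominated componentwise by
  Phi(t,0) (x[0] - M). As x[0] - M \<le> 1, this is at most the row sums of Phi(t,0), hence at
  most its norm. Asymptotic stability sends this bound to 0 along the whole trajectory, so every limit
  point lies below M. The lower bound is the same argument applied to -s and -x[0].\<close>

definition row_sum :: "real^'n^'n \<Rightarrow> 'n \<Rightarrow> real" where
  "row_sum A i = (\<Sum>k\<in>UNIV. A $ i $ k)"

lemma row_sum_mat_1 [simp]: "row_sum (mat 1) i = 1"
  by (simp add: row_sum_def mat_def sum.delta)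

lemma row_sum_le_mat_inf_norm: "row_sum A i \<le> mat_inf_norm A"
proof -
  have "row_sum A i \<le> (\<Sum>j\<in>UNIV. \<bar>A $ i $ j\<bar>)"
    unfolding row_sum_def by (rule sum_mono) simp
  also have "\<dots> \<le> mat_inf_norm A"
    unfolding mat_inf_norm_def by (rule Max_ge) auto
  finally show ?thesis .
qed

lemma diagm_matrix_mult_nth: "(diagm l ** A) $ i $ j = l $ i * A $ i $ j"
  unfolding matrix_matrix_mult_def diagm_def
  by (simp add: if_distrib[of "\<lambda>x. x * y" for y] sum.delta cong: if_cong)

lemma diagm_complement_mult_vec_nth: "((mat 1 - diagm l) *v s) $ i = (1 - l $ i) * s $ i"
proof -
  have "(mat 1 - diagm l) $ i $ j = (if i = j then 1 - l $ i else 0)" for j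
    by (simp add: mat_def diagm_def)
  then show ?thesis
    by (simp add: matrix_vector_mult_def if_distrib[of "\<lambda>x. x * y" for y] sum.delta cong: if_cong)
qed

lemma row_sum_diagm_mult:
  "row_sum ((diagm l ** A) ** P) i = (\<Sum>j\<in>UNIV. l $ i * A $ i $ j * row_sum P j)"
proof -
  have "row_sum ((diagm l ** A) ** P) i = (\<Sum>k\<in>UNIV. \<Sum>j\<in>UNIV. l $ i * A $ i $ j * P $ j $ k)"
    by (simp add: row_sum_def matrix_matrix_mult_def[of "diagm l ** A"] diagm_matrix_mult_nth)
  also have "\<dots> = (\<Sum>j\<in>UNIV. l $ i * A $ i $ j * row_sum P j)"
    unfolding row_sum_def by (subst sum.swap) (simp add: sum_distrib_left)
  finally show ?thesis .
qed

lemma traj_Suc_nth: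
  "traj W lam s x0 (Suc t) $ i =
     (\<Sum>j\<in>UNIV. lam t $ i * W t $ i $ j * traj W lam s x0 t $ j) + (1 - lam t $ i) * s $ i"
  by (simp add: diagm_complement_mult_vec_nth diagm_matrix_mult_nth
      matrix_vector_mult_def[of "diagm (lam t) ** W t"])

lemma traj_uminus: "traj W lam (- s) (- x0) t = - traj W lam s x0 t"
proof (induction t)
  case (Suc t)
  show ?case
    by (simp add: vec_eq_iff traj_Suc_nth Suc sum_negf del: traj.simps(2))
qed simp

lemma traj_le_bound_plus_row_sum:
  assumes stoch: "\<And>t. row_stochastic (W t)"
    and lam_nonneg: "\<And>t j. 0 \<le> lam t $ j" and lam_le_1: "\<And>t j. lam t $ j \<le> 1"
    and s_le: "\<And>j. s $ j \<le> M"
    and x0_le: "\<And>j. x0 $ j - M \<le> c"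
  shows "traj W lam s x0 t $ i \<le> M + c * row_sum (Phi_from W lam 0 t) i"
proof (induction t arbitrary: i)
  case 0
  show ?case using x0_le[of i] by simp
next
  case (Suc t)
  let ?a = "\<lambda>j. lam t $ i * W t $ i $ j"
  have a_nonneg: "?a j \<ge> 0" for j
    using stoch lam_nonneg unfolding row_stochastic_def by simp
  have "(\<Sum>j\<in>UNIV. ?a j * M) = lam t $ i * (\<Sum>j\<in>UNIV. W t $ i $ j) * M"
    by (simp add: sum_distrib_left sum_distrib_right)
  then have a_sum: "(\<Sum>j\<in>UNIV. ?a j * M) = lam t $ i * M"
    using stoch unfolding row_stochastic_def by simp
  have "traj W lam s x0 (Suc t) $ i - M =
      (\<Sum>j\<in>UNIV. ?a j * (traj W lam s x0 t $ j - M)) + (1 - lam t $ i) * (s $ i - M)"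
    by (simp add: traj_Suc_nth right_diff_distrib left_diff_distrib sum_subtractf a_sum
        del: traj.simps(2))
  also have "\<dots> \<le> (\<Sum>j\<in>UNIV. ?a j * (c * row_sum (Phi_from W lam 0 t) j))"
  proof -
    have "(1 - lam t $ i) * (s $ i - M) \<le> 0"
      using lam_le_1 s_le by (simp add: mult_nonneg_nonpos)
    moreover have "(\<Sum>j\<in>UNIV. ?a j * (traj W lam s x0 t $ j - M))
        \<le> (\<Sum>j\<in>UNIV. ?a j * (c * row_sum (Phi_from W lam 0 t) j))"
      using Suc.IH a_nonneg by (intro sum_mono mult_left_mono) (auto simp: algebra_simps)
    ultimately show ?thesis by linarith
  qed
  also have "\<dots> = c * row_sum (Phi_from W lam 0 (Suc t)) i"
    by (simp add: row_sum_diagm_mult sum_distrib_left mult_ac)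
  finally show ?case by simp
qed

lemma traj_ge_bound_minus_row_sum:
  assumes "\<And>t. row_stochastic (W t)"
    and "\<And>t j. 0 \<le> lam t $ j" and "\<And>t j. lam t $ j \<le> 1"
    and "\<And>j. m \<le> s $ j"
    and "\<And>j. m - x0 $ j \<le> c"
  shows "m - c * row_sum (Phi_from W lam 0 t) i \<le> traj W lam s x0 t $ i"
proof -
  have "traj W lam (- s) (- x0) t $ i \<le> - m + c * row_sum (Phi_from W lam 0 t) i"
    using assms by (intro traj_le_bound_plus_row_sum) auto
  then show ?thesis
    by (simp add: traj_uminus)
qed

lemma omega_limit_vec_nth:
  assumes "y \<in> omega_limit x"
  shows "y $ i \<in> omega_limit (\<lambda>t. x t $ i)"
  using assms tendsto_vec_nth unfolding omega_limit_def by (fastforce simp: o_def)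

lemma omega_limit_le:
  fixes x f :: "nat \<Rightarrow> 'a::linorder_topology"
  assumes "y \<in> omega_limit x" and "\<And>t. x t \<le> f t" and "f \<longlonglongrightarrow> L"
  shows "y \<le> L"
proof -
  obtain r where "strict_mono r" and "(x \<circ> r) \<longlonglongrightarrow> y"
    using assms(1) unfolding omega_limit_def by blast
  moreover have "(f \<circ> r) \<longlonglongrightarrow> L"
    using LIMSEQ_subseq_LIMSEQ[OF assms(3) \<open>strict_mono r\<close>] .
  ultimately show ?thesis
    using assms(2) by (intro tendsto_le[of sequentially "f \<circ> r" L "x \<circ> r" y]) auto
qed

lemma omega_limit_ge:
  fixes x f :: "nat \<Rightarrow> 'a::linorder_topology"
  assumes "y \<in> omega_limit x" and "\<And>t. f t \<le> x t" and "f \<longlonglongrightarrow> L"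
  shows "L \<le> y"
proof -
  obtain r where "strict_mono r" and "(x \<circ> r) \<longlonglongrightarrow> y"
    using assms(1) unfolding omega_limit_def by blast
  moreover have "(f \<circ> r) \<longlonglongrightarrow> L"
    using LIMSEQ_subseq_LIMSEQ[OF assms(3) \<open>strict_mono r\<close>] .
  ultimately show ?thesis
    using assms(2) by (intro tendsto_le[of sequentially "x \<circ> r" y "f \<circ> r" L]) auto
qed

theorem corollary2:
  fixes W :: "nat \<Rightarrow> real^'n^'n" and lam :: "nat \<Rightarrow> real^'n"
    and s x0 xstar :: "real^'n"
  assumes "tvfj_admissible W lam"
    and "\<forall>i. 0 \<le> s $ i \<and> s $ i \<le> 1"
    and "asymp_stable W lam"
    and "\<forall>i. 0 \<le> x0 $ i \<and> x0 $ i \<le> 1"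
    and "xstar \<in> omega_limit (traj W lam s x0)"
  shows "\<forall>i. Min (range (\<lambda>j. s $ j)) \<le> xstar $ i \<and> xstar $ i \<le> Max (range (\<lambda>j. s $ j))"
proof (intro allI conjI)
  fix i
  define m where "m = Min (range (\<lambda>j. s $ j))"
  define M where "M = Max (range (\<lambda>j. s $ j))"
  define \<epsilon> where "\<epsilon> = (\<lambda>t. mat_inf_norm (Phi_from W lam 0 t))"
  have stoch: "row_stochastic (W t)" and lam_bounds: "0 \<le> lam t $ j" "lam t $ j \<le> 1" for t j
    using assms(1) unfolding tvfj_admissible_def by auto
  have m_le: "m \<le> s $ j" and le_M: "s $ j \<le> M" for j
    unfolding m_def M_def by auto
  have m_x0: "m - x0 $ j \<le> 1" and x0_M: "x0 $ j - M \<le> 1" for j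
    using m_le[of j] le_M[of j] assms(2,4)[rule_format, of j] by linarith+
  have "\<epsilon> \<longlonglongrightarrow> 0"
    using assms(3) unfolding asymp_stable_def Phi_def \<epsilon>_def by (auto dest: spec[of _ 0])
  have xstar_i: "xstar $ i \<in> omega_limit (\<lambda>t. traj W lam s x0 t $ i)"
    using assms(5) by (rule omega_limit_vec_nth)
  have "traj W lam s x0 t $ i \<le> M + \<epsilon> t" for t
    using stoch lam_bounds le_M x0_M row_sum_le_mat_inf_norm[of "Phi_from W lam 0 t" i]
      traj_le_bound_plus_row_sum[of W lam s M x0 1 t i]
    unfolding \<epsilon>_def by simp
  moreover have "(\<lambda>t. M + \<epsilon> t) \<longlonglongrightarrow> M"
    using tendsto_add[OF tendsto_const \<open>\<epsilon> \<longlonglongrightarrow> 0\<close>] by simp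
  ultimately show "xstar $ i \<le> Max (range (\<lambda>j. s $ j))"
    unfolding M_def by (rule omega_limit_le[OF xstar_i])
  have "m - \<epsilon> t \<le> traj W lam s x0 t $ i" for t
    using stoch lam_bounds m_le m_x0 row_sum_le_mat_inf_norm[of "Phi_from W lam 0 t" i]
      traj_ge_bound_minus_row_sum[of W lam m s x0 1 t i]
    unfolding \<epsilon>_def by simp
  moreover have "(\<lambda>t. m - \<epsilon> t) \<longlonglongrightarrow> m"
    using tendsto_diff[OF tendsto_const \<open>\<epsilon> \<longlonglongrightarrow> 0\<close>] by simp
  ultimately show "Min (range (\<lambda>j. s $ j)) \<le> xstar $ i"
    unfolding m_def by (rule omega_limit_ge[OF xstar_i])
qed

end
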